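(* For integers $m\ge1$, $n\ge2$, $$\sum_{k=1}^{n-1}\cot^{2m}\frac{k\pi}{n}=(-1)^m(n-1)-\frac{1}{(2m-1)!}\sum_{k=1}^m(-1)^kA_{2m}^{(2k)}\frac{4^kB_{2k}}{2k}\,(n^{2k}-1).$$
   Context: The arctangent numbers $A_m^{(k)}$ are defined by $\frac{(\arctan z)^k}{k!}=\sum_{m\ge k}\frac{A_m^{(k)}}{m!}z^m$. $B_j$ are the Bernoulli numbers, $\frac{z}{e^z-1}=\sum_{j\ge0}\frac{B_j}{j!}z^j$ (so $B_2=1/6$). *)

theory Defs
  imports "HOL-Analysis.Analysis" "HOL-Computational_Algebra.Formal_Power_Series"
begin

text \<open>Arctangent numbers: (arctan z)^k / k! = sum_{m} A m k / m! z^m, i.e.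
  A m k is m! times the m-th Taylor coefficient at 0, which is the m-th derivative at 0.\<close>
definition arctan_num :: "nat \<Rightarrow> nat \<Rightarrow> real" where
  "arctan_num m k = (deriv ^^ m) (\<lambda>x::real. arctan x ^ k / fact k) 0"

text \<open>Bernoulli numbers via z/(e^z - 1) = sum_j B_j / j! z^j (so B_1 = -1/2).\<close>
definition bernoulli_num :: "nat \<Rightarrow> real" where
  "bernoulli_num j = fact j * fps_nth (fps_X / (fps_exp 1 - 1)) j"

end

theory Submission
  imports Defs
begin

text \<open>
  The numbers x_k = cot (k pi / n), 0 < k < n, are the n - 1 roots of (x + i)^n - (x - i)^n, so
  Q(z) = prod_k (1 - x_k z) satisfies 2 i n z Q(z) = (1 + i z)^n - (1 - i z)^n, and the power sums
  of the x_k are the coefficients of S(z) = sum_k 1 / (1 - x_k z) = (n - 1) - z Q'(z) / Q(z).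
  With z = tan t this becomes (1 + z^2) S(z) = (n - 1) - z (n cot (n t) - cot t), and
  n cot (n t) - cot t is the derivative of ln (sin (n t) / (n sin t)), whose Taylor coefficients
  are Bernoulli numbers. So S is (n - 1) arctan' minus z times the derivative of a Bernoulli series
  composed with arctan, and its coefficient of z^(2m) involves the coefficients of the powers
  arctan^(2k), i.e. the arctangent numbers. Everything is done with formal power series: the
  substitution z = tan t becomes composition with the arctan series, and the trigonometry is
  replaced by the identity exp (2 i arctan z) = (1 + i z) / (1 - i z).
\<close>

section \<open>The arctangent series\<close>

text \<open>The library version of this, \<open>fps_nth_fps_expansion\<close>, is stated for complex
  functions only.\<close>

lemma fps_nth_eq_higher_deriv:
  fixes f :: "'a::{banach, real_normed_field} \<Rightarrow> 'a"
  assumes "f has_fps_expansion F"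
  shows "fps_nth F n = (deriv ^^ n) f 0 / fact n"
  using assms
proof (induction n arbitrary: f F)
  case 0
  then have "eventually (\<lambda>z. eval_fps F z = f z) (nhds 0)"
    by (auto simp: has_fps_expansion_def)
  then have "eval_fps F 0 = f 0"
    by (rule eventually_nhds_x_imp_x)
  then show ?case by (simp add: eval_fps_at_0)
next
  case (Suc n)
  have "fps_nth (fps_deriv F) n = (deriv ^^ n) (deriv f) 0 / fact n"
    using Suc.prems by (intro Suc.IH has_fps_expansion_deriv)
  then show ?case
    unfolding funpow_Suc_right o_def by (simp add: field_split_simps del: of_nat_Suc)
qed

definition arctan_fps :: "'a::field_char_0 fps" where
  "arctan_fps = Abs_fps (\<lambda>j. if odd j then (-1) ^ (j div 2) / of_nat j else 0)"

lemma arctan_fps_nth_0 [simp]: "fps_nth arctan_fps 0 = 0"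
  by (simp add: arctan_fps_def)

lemma fps_nth_deriv_arctan_fps:
  "fps_nth (fps_deriv arctan_fps) j = (if even j then (-1) ^ (j div 2) else 0 :: 'a::field_char_0)"
  by (auto simp: arctan_fps_def simp del: of_nat_Suc)

lemma arctan_fps_deriv: "(1 + fps_X ^ 2) * fps_deriv arctan_fps = (1 :: 'a::field_char_0 fps)"
proof (rule fps_ext)
  fix j
  show "fps_nth ((1 + fps_X ^ 2) * fps_deriv arctan_fps) j = fps_nth (1 :: 'a fps) j"
  proof (cases "j < 2")
    case True
    then have "j = 0 \<or> j = 1" by auto
    then show ?thesis
      by (auto simp: distrib_right fps_X_power_mult_nth fps_nth_deriv_arctan_fps arctan_fps_def)
  next
    case False
    then obtain i where "j = i + 2"
      by (metis add.commute le_Suc_ex not_less)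
    then show ?thesis
      by (auto simp: distrib_right fps_X_power_mult_nth fps_nth_deriv_arctan_fps
               simp del: fps_deriv_nth elim!: evenE)
  qed
qed

lemma arctan_has_fps_expansion: "arctan has_fps_expansion arctan_fps"
proof (rule has_fps_expansionI)
  have "eventually (\<lambda>u::real. u \<in> ball 0 1) (nhds 0)"
    by (intro eventually_nhds_in_open) auto
  then show "\<forall>\<^sub>F u in nhds 0. (\<lambda>j. fps_nth arctan_fps j * u ^ j) sums arctan u"
  proof eventually_elim
    case (elim u)
    then have "\<bar>u\<bar> \<le> 1" by simp
    then have "(\<lambda>k. (-1) ^ k * (1 / real (k * 2 + 1) * u ^ (k * 2 + 1))) sums arctan u"
      using summable_arctan_series arctan_series by (simp add: sums_iff)
    from sums_if'[OF this] show ?case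
      by (rule sums_cong[THEN iffD1, rotated]) (auto simp: arctan_fps_def elim!: oddE)
  qed
qed

lemma arctan_num_conv_fps_nth:
  "arctan_num m k = fact m / fact k * fps_nth (arctan_fps ^ k) m"
proof -
  have "(\<lambda>x. arctan x ^ k) has_fps_expansion arctan_fps ^ k"
    by (induction k) (auto intro: has_fps_expansion_mult[OF arctan_has_fps_expansion])
  then have "(\<lambda>x. arctan x ^ k * (1 / fact k))
      has_fps_expansion arctan_fps ^ k * fps_const (1 / fact k)"
    by (intro fps_expansion_intros)
  from fps_nth_eq_higher_deriv[OF this, of m] show ?thesis
    by (simp add: arctan_num_def field_simps)
qed

lemma fps_eq_0_if_deriv_eq_mult:
  fixes Y A :: "'a::{idom, semiring_char_0} fps"
  assumes "fps_deriv Y = A * Y" and "fps_nth Y 0 = 0"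
  shows "Y = 0"
proof (rule ccontr)
  assume "Y \<noteq> 0"
  define d where "d = subdegree Y"
  have "fps_nth Y d \<noteq> 0"
    using \<open>Y \<noteq> 0\<close> by (simp add: d_def)
  then have "d > 0"
    using assms(2) by (intro gr0I) auto
  have "fps_nth (A * Y) (d - 1) = 0"
    using \<open>d > 0\<close>
    by (auto simp: fps_mult_nth d_def intro!: sum.neutral nth_less_subdegree_zero)
  moreover have "fps_nth (fps_deriv Y) (d - 1) = of_nat d * fps_nth Y d"
    using \<open>d > 0\<close> by simp
  ultimately show False
    using assms(1) \<open>d > 0\<close> \<open>fps_nth Y d \<noteq> 0\<close> by simp
qed

lemma fps_exp_compose_arctan_fps:
  fixes c :: "'a::field_char_0"
  assumes "c ^ 2 = -1"
  shows "(fps_exp (2 * c) oo arctan_fps) * (1 - fps_const c * fps_X) = 1 + fps_const c * fps_X"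
proof -
  define E where "E = fps_exp (2 * c) oo arctan_fps"
  define C where "C = fps_const c"
  define Y where "Y = E * (1 - C * fps_X) - (1 + C * fps_X)"
  have "C * C + 1 = 0"
    using assms by (simp add: C_def power2_eq_square flip: fps_const_mult)
  have "fps_deriv E = (fps_const (2 * c) * fps_exp (2 * c) oo arctan_fps) * fps_deriv arctan_fps"
    by (simp add: E_def fps_compose_deriv)
  also have "\<dots> = 2 * C * E * fps_deriv arctan_fps"
    by (simp add: E_def C_def fps_numeral_fps_const flip: fps_const_mult_apply_left)
  finally have E_deriv: "fps_deriv E = 2 * C * E * fps_deriv arctan_fps" .
  have "(1 + fps_X ^ 2) * fps_deriv E = 2 * C * E * ((1 + fps_X ^ 2) * fps_deriv arctan_fps)"
    unfolding E_deriv by (simp only: mult_ac)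
  then have "(1 + fps_X ^ 2) * fps_deriv E = 2 * C * E"
    by (simp add: arctan_fps_deriv)
  then have "(1 + fps_X ^ 2) * fps_deriv Y = (C + fps_X) * Y + (C * C + 1) * (fps_X - fps_X * E)"
    by (simp add: Y_def C_def algebra_simps power2_eq_square)
  then have ode: "(1 + fps_X ^ 2) * fps_deriv Y = (C + fps_X) * Y"
    using \<open>C * C + 1 = 0\<close> by simp
  have "fps_deriv Y = ((1 + fps_X ^ 2) * fps_deriv arctan_fps) * fps_deriv Y"
    by (simp add: arctan_fps_deriv)
  also have "\<dots> = fps_deriv arctan_fps * ((1 + fps_X ^ 2) * fps_deriv Y)"
    by (simp only: mult_ac)
  also have "\<dots> = (fps_deriv arctan_fps * (C + fps_X)) * Y"
    by (simp only: ode mult.assoc)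
  finally have "Y = 0"
    by (rule fps_eq_0_if_deriv_eq_mult) (simp add: Y_def E_def)
  then show ?thesis
    by (simp add: Y_def E_def C_def)
qed

section \<open>Bernoulli series\<close>

definition bernoulli_fps :: "'a::field_char_0 fps" where
  "bernoulli_fps = fps_X / (fps_exp 1 - 1)"

lemma bernoulli_num_conv_fps_nth: "bernoulli_num j = fact j * fps_nth bernoulli_fps j"
  by (simp add: bernoulli_num_def bernoulli_fps_def)

lemma fps_exp_1_minus_1_nonzero: "fps_exp 1 - 1 \<noteq> (0 :: 'a::field_char_0 fps)"
proof
  assume "fps_exp 1 - 1 = (0 :: 'a fps)"
  then have "fps_nth (fps_exp 1 - 1 :: 'a fps) 1 = 0" by simp
  then show False by simp
qed

lemma bernoulli_fps_mult_exp_minus_1: "bernoulli_fps * (fps_exp 1 - 1) = fps_X"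
proof -
  have "subdegree (fps_exp 1 - 1 :: 'a fps) = 1"
    by (rule subdegreeI) auto
  then have "(fps_exp 1 - 1 :: 'a fps) dvd fps_X"
    using fps_exp_1_minus_1_nonzero by (subst fps_dvd_iff) auto
  then show ?thesis
    unfolding bernoulli_fps_def by (rule dvd_div_mult_self)
qed

lemma bernoulli_fps_compose_linear_mult:
  "(bernoulli_fps oo (fps_const d * fps_X)) * (fps_exp d - 1) = fps_const d * fps_X"
proof -
  have "(bernoulli_fps * (fps_exp 1 - 1)) oo (fps_const d * fps_X) = fps_X oo (fps_const d * fps_X)"
    by (simp only: bernoulli_fps_mult_exp_minus_1)
  then show ?thesis
    by (simp add: fps_compose_mult_distrib fps_compose_sub_distrib)
qed

text \<open>The series of d z coth (d z / 2); for d = 2 i n it is 2 n z cot (n z).\<close>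

definition bernoulli_even_fps :: "'a::field_char_0 \<Rightarrow> 'a fps" where
  "bernoulli_even_fps d =
     (bernoulli_fps oo (fps_const d * fps_X)) + (bernoulli_fps oo (fps_const (- d) * fps_X))"

lemma bernoulli_fps_compose_arctan_mult:
  fixes c :: "'a::field_char_0" and n :: nat
  assumes "c ^ 2 = -1"
  defines "d \<equiv> 2 * c * of_nat n"
  shows "(bernoulli_fps oo (fps_const d * fps_X) oo arctan_fps)
           * ((1 + fps_const c * fps_X) ^ n - (1 - fps_const c * fps_X) ^ n)
         = fps_const d * arctan_fps * (1 - fps_const c * fps_X) ^ n"
proof -
  define E where "E = fps_exp (2 * c) oo arctan_fps"
  define B where "B = bernoulli_fps oo (fps_const d * fps_X) oo arctan_fps"
  define M where "M = (1 - fps_const c * fps_X) ^ n"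
  have "fps_exp d oo arctan_fps = E ^ n"
    by (simp add: E_def d_def fps_compose_power fps_exp_power_mult mult_ac)
  moreover have "B * ((fps_exp d oo arctan_fps) - 1) = fps_const d * arctan_fps"
    using arg_cong[OF bernoulli_fps_compose_linear_mult[of d], of "\<lambda>f. f oo arctan_fps"]
    by (simp add: B_def fps_compose_mult_distrib fps_compose_sub_distrib
             flip: fps_const_mult_apply_left)
  ultimately have "B * (E ^ n - 1) * M = fps_const d * arctan_fps * M"
    by simp
  moreover have "(1 + fps_const c * fps_X) ^ n = E ^ n * M"
    using fps_exp_compose_arctan_fps[OF assms(1)]
    by (simp add: E_def M_def flip: power_mult_distrib)
  ultimately show ?thesis
    by (simp add: B_def M_def algebra_simps)
qed

lemma bernoulli_even_fps_compose_arctan_mult: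
  fixes c :: "'a::field_char_0" and n :: nat
  assumes "c ^ 2 = -1"
  defines "P \<equiv> (1 + fps_const c * fps_X) ^ n" and "M \<equiv> (1 - fps_const c * fps_X) ^ n"
  shows "(bernoulli_even_fps (2 * c * of_nat n) oo arctan_fps) * (P - M)
       = fps_const (2 * c * of_nat n) * arctan_fps * (P + M)"
proof -
  have "(- c) ^ 2 = -1"
    using assms by simp
  from bernoulli_fps_compose_arctan_mult[OF this, of n] have
    "(bernoulli_fps oo (fps_const (- (2 * c * of_nat n)) * fps_X) oo arctan_fps) * (P - M)
      = fps_const (2 * c * of_nat n) * arctan_fps * P"
    by (simp add: P_def M_def fps_const_neg[symmetric] algebra_simps del: fps_const_neg)
  with bernoulli_fps_compose_arctan_mult[OF assms(1), of n] show ?thesis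
    by (simp add: bernoulli_even_fps_def fps_compose_add_distrib P_def M_def algebra_simps)
qed

lemma bernoulli_even_fps_compose_arctan_mult_X:
  fixes c :: "'a::field_char_0"
  assumes "c ^ 2 = -1"
  shows "(bernoulli_even_fps (2 * c) oo arctan_fps) * fps_X = 2 * arctan_fps"
proof -
  define C where "C = fps_const c"
  have "C * C = -1"
    using assms by (simp add: C_def power2_eq_square flip: fps_const_mult)
  then have "2 * C \<noteq> 0"
    by auto
  have "(bernoulli_even_fps (2 * c) oo arctan_fps) * (2 * C * fps_X) = 2 * C * (2 * arctan_fps)"
    using bernoulli_even_fps_compose_arctan_mult[OF assms, of 1]
    by (simp add: C_def fps_numeral_fps_const algebra_simps)
  then have "(2 * C) * ((bernoulli_even_fps (2 * c) oo arctan_fps) * fps_X)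
      = (2 * C) * (2 * arctan_fps)"
    by (simp only: mult_ac)
  then show ?thesis
    using \<open>2 * C \<noteq> 0\<close> mult_left_cancel by blast
qed

text \<open>The series of ln (sin (n t) / (n sin t)), read off from
  t cot t = sum_k (-4)^k B_(2k) t^(2k) / (2k)!.\<close>

definition log_sin_ratio_fps :: "nat \<Rightarrow> 'a::field_char_0 fps" where
  "log_sin_ratio_fps n = Abs_fps (\<lambda>j. if even j \<and> j > 0
     then (-4) ^ (j div 2) * fps_nth bernoulli_fps j * (of_nat n ^ j - 1) / of_nat j else 0)"

lemma log_sin_ratio_fps_deriv:
  fixes c :: "'a::field_char_0"
  assumes "c ^ 2 = -1"
  shows "2 * fps_X * fps_deriv (log_sin_ratio_fps n)
       = bernoulli_even_fps (2 * c * of_nat n) - bernoulli_even_fps (2 * c)"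
proof (rule fps_ext)
  fix j
  let ?a = "2 * c * of_nat n" and ?b = "2 * c"
  have lhs: "fps_nth (2 * fps_X * fps_deriv (log_sin_ratio_fps n)) j
      = 2 * of_nat j * fps_nth (log_sin_ratio_fps n :: 'a fps) j"
    by (cases j) (simp_all add: mult.assoc del: of_nat_Suc)
  have rhs: "fps_nth (bernoulli_even_fps ?a - bernoulli_even_fps ?b) j
      = fps_nth bernoulli_fps j * (?a ^ j + (- ?a) ^ j - ?b ^ j - (- ?b) ^ j)"
    by (simp only: bernoulli_even_fps_def fps_add_nth fps_sub_nth fps_nth_compose_linear)
       (simp add: algebra_simps)
  show "fps_nth (2 * fps_X * fps_deriv (log_sin_ratio_fps n)) j
      = fps_nth (bernoulli_even_fps ?a - bernoulli_even_fps ?b) j"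
  proof (cases "even j \<and> j > 0")
    case True
    then obtain k where "j = 2 * k" "k > 0"
      by (auto elim!: evenE)
    moreover have "?b ^ (2 * k) = (-4) ^ k"
      using assms by (simp add: power_mult power_mult_distrib)
    moreover have "?a ^ (2 * k) = ?b ^ (2 * k) * of_nat n ^ (2 * k)"
      by (simp add: power_mult_distrib)
    ultimately show ?thesis
      unfolding lhs rhs by (simp add: log_sin_ratio_fps_def field_simps)
  next
    case False
    then show ?thesis
      unfolding lhs rhs by (auto simp: log_sin_ratio_fps_def power_minus')
  qed
qed

lemma log_sin_ratio_fps_deriv_compose_arctan:
  fixes c :: "'a::field_char_0"
  assumes "c ^ 2 = -1"
  shows "2 * arctan_fps * (fps_deriv (log_sin_ratio_fps n) oo arctan_fps)
       = (bernoulli_even_fps (2 * c * of_nat n) oo arctan_fps)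
         - (bernoulli_even_fps (2 * c) oo arctan_fps)"
  using arg_cong[OF log_sin_ratio_fps_deriv[OF assms, of n], of "\<lambda>f. f oo arctan_fps"]
  by (simp add: fps_compose_mult_distrib fps_compose_sub_distrib fps_numeral_fps_const)

section \<open>Real coefficients\<close>

definition fps_of_real :: "real fps \<Rightarrow> 'a::real_algebra_1 fps" where
  "fps_of_real f = Abs_fps (\<lambda>j. of_real (fps_nth f j))"

lemma fps_nth_fps_of_real [simp]: "fps_nth (fps_of_real f) j = of_real (fps_nth f j)"
  by (simp add: fps_of_real_def)

lemma fps_of_real_mult: "fps_of_real (f * g) = fps_of_real f * fps_of_real g"
  by (rule fps_ext) (simp add: fps_mult_nth)

lemma fps_of_real_power: "fps_of_real (f ^ k) = fps_of_real f ^ k"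
  by (induction k) (simp add: fps_eq_iff, simp add: fps_of_real_mult)

lemma fps_of_real_compose: "fps_of_real (f oo g) = fps_of_real f oo fps_of_real g"
  by (rule fps_ext) (simp add: fps_compose_nth fps_of_real_power[symmetric])

lemma fps_of_real_arctan_fps: "fps_of_real arctan_fps = (arctan_fps :: 'a::real_field fps)"
  by (rule fps_ext) (simp add: arctan_fps_def)

lemma fps_of_real_bernoulli_fps: "fps_of_real bernoulli_fps = (bernoulli_fps :: 'a::real_field fps)"
proof -
  have "fps_of_real (fps_exp 1 - 1) = (fps_exp 1 - 1 :: 'a fps)"
    by (rule fps_ext) simp
  then have "fps_of_real bernoulli_fps * (fps_exp 1 - 1) = (fps_of_real fps_X :: 'a fps)"
    by (metis bernoulli_fps_mult_exp_minus_1 fps_of_real_mult)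
  also have "\<dots> = bernoulli_fps * (fps_exp 1 - 1)"
    by (simp add: bernoulli_fps_mult_exp_minus_1 fps_eq_iff)
  finally show ?thesis
    using fps_exp_1_minus_1_nonzero by simp
qed

lemma fps_of_real_log_sin_ratio_fps:
  "fps_of_real (log_sin_ratio_fps n) = (log_sin_ratio_fps n :: 'a::real_field fps)"
proof -
  have "(fps_nth bernoulli_fps j :: 'a) = fps_nth (fps_of_real bernoulli_fps) j" for j
    by (simp only: fps_of_real_bernoulli_fps)
  then show ?thesis
    by (intro fps_ext) (simp add: log_sin_ratio_fps_def)
qed

lemma sum_atLeast0_atMost_double_even:
  fixes f :: "nat \<Rightarrow> 'a::comm_monoid_add"
  assumes "\<And>i. i = 0 \<or> odd i \<Longrightarrow> f i = 0"
  shows "(\<Sum>i=0..2*m. f i) = (\<Sum>k=1..m. f (2*k))"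
proof (induction m)
  case 0
  then show ?case
    using assms[of 0] by simp
next
  case (Suc m)
  have "(\<Sum>i=0..2*Suc m. f i) = (\<Sum>i=0..2*m. f i) + f (2*m+1) + f (2*m+2)"
    by (simp add: sum.atLeast0_atMost_Suc)
  then show ?case
    using Suc assms[of "2*m+1"] by (simp add: sum.cl_ivl_Suc)
qed

lemma fps_nth_log_sin_ratio_compose_arctan:
  "fact (2*m) * fps_nth (log_sin_ratio_fps n oo arctan_fps) (2*m)
     = (\<Sum>k=1..m. (-1) ^ k * arctan_num (2*m) (2*k)
          * (4 ^ k * bernoulli_num (2*k) / (2 * real k)) * (real n ^ (2*k) - 1))"
proof -
  have compose_eq: "fps_nth (log_sin_ratio_fps n oo arctan_fps) (2*m)
      = (\<Sum>k=1..m. fps_nth (log_sin_ratio_fps n) (2*k) * fps_nth (arctan_fps ^ (2*k)) (2*m))"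
    unfolding fps_compose_nth
    by (rule sum_atLeast0_atMost_double_even) (auto simp: log_sin_ratio_fps_def)
  have "fact (2*m) *
      (\<Sum>k=1..m. fps_nth (log_sin_ratio_fps n) (2*k) * fps_nth (arctan_fps ^ (2*k)) (2*m))
      = (\<Sum>k=1..m. (-1) ^ k * arctan_num (2*m) (2*k)
          * (4 ^ k * bernoulli_num (2*k) / (2 * real k)) * (real n ^ (2*k) - 1))"
    unfolding sum_distrib_left
  proof (intro sum.cong refl)
    fix k assume "k \<in> {1..m}"
    have "(-4 :: real) ^ k = (-1) ^ k * 4 ^ k"
      by (simp flip: power_mult_distrib)
    then show "fact (2*m) * (fps_nth (log_sin_ratio_fps n) (2*k) * fps_nth (arctan_fps ^ (2*k)) (2*m))
        = (-1) ^ k * arctan_num (2*m) (2*k)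
          * (4 ^ k * bernoulli_num (2*k) / (2 * real k)) * (real n ^ (2*k) - 1)"
      using \<open>k \<in> {1..m}\<close>
      by (simp add: log_sin_ratio_fps_def arctan_num_conv_fps_nth bernoulli_num_conv_fps_nth)
  qed
  then show ?thesis
    unfolding compose_eq .
qed

section \<open>Cotangents as roots\<close>

lemma poly_eq_smult_prod_roots:
  fixes p :: "'a::idom poly"
  assumes "finite A" and "degree p \<le> card A" and "coeff p (card A) = c"
    and "\<And>a. a \<in> A \<Longrightarrow> poly p a = 0"
  shows "p = smult c (\<Prod>a\<in>A. [:- a, 1:])"
proof (rule ccontr)
  define q where "q = (\<Prod>a\<in>A. [:- a, 1:])"
  define D where "D = p - smult c q"
  assume "p \<noteq> smult c (\<Prod>a\<in>A. [:- a, 1:])"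
  then have "D \<noteq> 0"
    by (simp add: D_def q_def)
  have "degree q = card A"
    using \<open>finite A\<close> by (simp add: q_def degree_prod_eq_sum_degree)
  moreover have "lead_coeff q = 1"
    unfolding q_def lead_coeff_prod by simp
  ultimately have "degree (smult c q) \<le> card A" and "coeff q (card A) = 1"
    using degree_smult_le[of c q] by simp_all
  then have "degree D \<le> card A" and "coeff D (card A) = 0"
    using assms(2,3) by (simp_all add: D_def degree_diff_le)
  then have "degree D < card A"
    using \<open>D \<noteq> 0\<close> by (metis le_neq_implies_less leading_coeff_0_iff)
  moreover have "A \<subseteq> {x. poly D x = 0}"
    using \<open>finite A\<close> assms(4) by (auto simp: D_def q_def poly_prod)
  then have "card A \<le> degree D"
    using \<open>D \<noteq> 0\<close> card_mono[OF poly_roots_finite] card_poly_roots_bound le_trans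
    by blast
  ultimately show False
    by simp
qed

definition cot_frac :: "nat \<Rightarrow> nat \<Rightarrow> complex" where
  "cot_frac n k = complex_of_real (cot (real k * pi / real n))"

lemma inj_on_cot_frac: "inj_on (cot_frac n) {1..n-1}"
proof
  fix j k
  assume j: "j \<in> {1..n-1}" and k: "k \<in> {1..n-1}" and "cot_frac n j = cot_frac n k"
  define a b where "a = real j * pi / real n" and "b = real k * pi / real n"
  have "0 < a" "a < pi" "0 < b" "b < pi"
    using j k by (auto simp: a_def b_def field_simps)
  then have "sin a > 0" "sin b > 0"
    by (simp_all add: sin_gt_zero)
  have "sin (b - a) = sin a * sin b * (cot a - cot b)"
    using \<open>sin a > 0\<close> \<open>sin b > 0\<close>
    by (simp add: sin_diff cot_def field_simps)
  also have "cot a = cot b"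
    using \<open>cot_frac n j = cot_frac n k\<close> by (simp add: cot_frac_def a_def b_def)
  finally have "b - a = 0"
    using \<open>0 < a\<close> \<open>a < pi\<close> \<open>0 < b\<close> \<open>b < pi\<close> sin_zero_pi_iff[of "b - a"]
    by simp
  then show "j = k"
    using j by (auto simp: a_def b_def)
qed

lemma cot_frac_root:
  assumes "0 < k" and "k < n"
  shows "(cot_frac n k + \<i>) ^ n = (cot_frac n k - \<i>) ^ n"
proof -
  define a where "a = real k * pi / real n"
  have "0 < a" "a < pi"
    using assms by (auto simp: a_def field_simps)
  then have "sin a \<noteq> 0"
    using sin_gt_zero by force
  moreover have "cot_frac n k = of_real (cot a)"
    by (simp add: cot_frac_def a_def)
  ultimately have "cot_frac n k + \<i> = cis a / sin a"
    and "cot_frac n k - \<i> = cis (- a) / sin a"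
    by (simp_all add: cot_def cis.ctr Complex_eq field_simps)
  moreover have "real n * a = real k * pi"
    using assms by (simp add: a_def)
  then have "cis a ^ n = cis (real k * pi)" and "cis (- a) ^ n = cis (- (real k * pi))"
    using Complex.DeMoivre[of a n] Complex.DeMoivre[of "- a" n] by simp_all
  moreover have "cis (real k * pi) = cis (- (real k * pi))"
    by (simp add: cis.ctr Complex_eq)
  ultimately show ?thesis
    by (simp add: power_divide)
qed

lemma poly_cot_frac_product:
  "[:\<i>, 1:] ^ n - [:- \<i>, 1:] ^ n
     = smult (2 * \<i> * of_nat n) (\<Prod>k=1..n-1. [:- cot_frac n k, 1:])"
  (is "?p = _")
proof (cases "n = 0")
  case False
  have coeff_p: "coeff ?p j = of_nat (n choose j) * (\<i> ^ (n - j) - (- \<i>) ^ (n - j))"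
    if "j \<le> n" for j
    using that by (simp add: coeff_linear_poly_power algebra_simps)
  have "degree ?p \<le> n"
    by (intro degree_diff_le) (simp_all add: degree_linear_power)
  have "coeff ?p j = 0" if "j > n - 1" for j
  proof (cases "j = n")
    case True
    then show ?thesis
      using coeff_p[of n] by simp
  next
    case False
    then show ?thesis
      using that \<open>n \<noteq> 0\<close> \<open>degree ?p \<le> n\<close>
      by (intro coeff_eq_0) auto
  qed
  then have "degree ?p \<le> n - 1"
    by (intro degree_le) auto
  moreover have "coeff ?p (n - 1) = 2 * \<i> * of_nat n"
  proof -
    have "n - (n - 1) = 1" and "n choose (n - 1) = n"
      using False binomial_Suc_n[of "n - 1"] by simp_all
    then show ?thesis
      using coeff_p[of "n - 1"] by simp
  qed
  moreover have "card (cot_frac n ` {1..n-1}) = n - 1"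
    using card_image[OF inj_on_cot_frac] by simp
  moreover have "poly ?p a = 0" if "a \<in> cot_frac n ` {1..n-1}" for a
    using that cot_frac_root by (auto simp: add.commute)
  ultimately have
    "?p = smult (2 * \<i> * of_nat n) (\<Prod>a\<in>cot_frac n ` {1..n-1}. [:- a, 1:])"
    by (intro poly_eq_smult_prod_roots) auto
  then show ?thesis
    unfolding prod.reindex[OF inj_on_cot_frac] o_def .
qed simp

lemma fps_cot_frac_product:
  "(1 + fps_const \<i> * fps_X) ^ n - (1 - fps_const \<i> * fps_X) ^ n
     = fps_const (2 * \<i> * of_nat n) * fps_X
       * (\<Prod>k=1..n-1. 1 - fps_const (cot_frac n k) * fps_X)"
proof -
  have "poly ([:1, \<i>:] ^ n - [:1, - \<i>:] ^ n) y
      = poly (smult (2 * \<i> * of_nat n) (pCons 0 (\<Prod>k=1..n-1. [:1, - cot_frac n k:]))) y"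
    for y
  proof (cases "y = 0 \<or> n = 0")
    case False
    have "y ^ (n - 1) * (\<Prod>k=1..n-1. 1 / y - cot_frac n k)
        = (\<Prod>k=1..n-1. y * (1 / y - cot_frac n k))"
      by (simp add: prod.distrib)
    also have "\<dots> = (\<Prod>k=1..n-1. 1 - cot_frac n k * y)"
      using False by (intro prod.cong) (simp_all add: field_simps)
    finally have prod_eq: "y ^ (n - 1) * (\<Prod>k=1..n-1. 1 / y - cot_frac n k)
        = (\<Prod>k=1..n-1. 1 - cot_frac n k * y)" .
    have "poly ([:1, \<i>:] ^ n - [:1, - \<i>:] ^ n) y
        = y ^ n * poly ([:\<i>, 1:] ^ n - [:- \<i>, 1:] ^ n) (1 / y)"
      using False by (simp add: power_mult_distrib[symmetric] algebra_simps)
    also have "\<dots>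
        = 2 * \<i> * of_nat n * y * (y ^ (n - 1) * (\<Prod>k=1..n-1. 1 / y - cot_frac n k))"
      using False by (simp add: poly_cot_frac_product poly_prod power_Suc[symmetric] mult_ac)
    finally show ?thesis
      unfolding prod_eq by (simp add: poly_prod algebra_simps)
  qed auto
  then have "[:1, \<i>:] ^ n - [:1, - \<i>:] ^ n
      = smult (2 * \<i> * of_nat n) (pCons 0 (\<Prod>k=1..n-1. [:1, - cot_frac n k:]))"
    by (rule poly_ext)
  from arg_cong[OF this, of fps_of_poly] show ?thesis
    by (simp add: fps_of_poly_smult fps_of_poly_pCons fps_of_poly_prod fps_of_poly_linear'
        fps_of_poly_diff fps_of_poly_power fps_const_neg[symmetric] algebra_simps
        del: fps_const_neg)
qed

section \<open>The generating function of the power sums\<close>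

lemma fps_nth_inverse_one_minus_const_X:
  "fps_nth (inverse (1 - fps_const c * fps_X)) k = (c :: 'a::field_char_0) ^ k"
  using one_minus_const_fps_X_neg_power'[of 1 c] by simp

lemma sum_fps_inverse_factors_mult_prod:
  fixes c :: "'b \<Rightarrow> 'a::field"
  assumes "finite K"
  shows "(\<Sum>k\<in>K. inverse (1 - fps_const (c k) * fps_X))
           * (\<Prod>k\<in>K. 1 - fps_const (c k) * fps_X)
       = of_nat (card K) * (\<Prod>k\<in>K. 1 - fps_const (c k) * fps_X)
         - fps_X * fps_deriv (\<Prod>k\<in>K. 1 - fps_const (c k) * fps_X)"
  using assms
proof (induction K rule: finite_induct)
  case (insert a K)
  define L where "L = 1 - fps_const (c a) * fps_X"
  define Q where "Q = (\<Prod>k\<in>K. 1 - fps_const (c k) * fps_X)"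
  have "(\<Sum>k\<in>insert a K. inverse (1 - fps_const (c k) * fps_X)) * (L * Q)
      = inverse L * L * Q + L * ((\<Sum>k\<in>K. inverse (1 - fps_const (c k) * fps_X)) * Q)"
    using insert by (simp add: L_def algebra_simps)
  also have "\<dots> = Q + L * (of_nat (card K) * Q - fps_X * fps_deriv Q)"
    using insert.IH by (simp add: L_def Q_def inverse_mult_eq_1)
  also have "\<dots> = of_nat (card K + 1) * (L * Q) - fps_X * fps_deriv (L * Q)"
    by (simp add: L_def algebra_simps)
  finally show ?case
    using insert by (simp add: L_def Q_def)
qed simp

lemma fps_deriv_one_plus_const_X_power:
  fixes c :: "'a::field_char_0"
  assumes "c ^ 2 = -1"
  shows "(1 + fps_X ^ 2) * fps_deriv ((1 + fps_const c * fps_X) ^ n)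
       = of_nat n * fps_const c * (1 - fps_const c * fps_X) * (1 + fps_const c * fps_X) ^ n"
proof (cases n)
  case (Suc k)
  define C where "C = fps_const c"
  have "C * C = -1"
    using assms by (simp add: C_def power2_eq_square flip: fps_const_mult)
  have "(1 - C * fps_X) * (1 + C * fps_X) = 1 - (C * C) * fps_X ^ 2"
    by (simp add: power2_eq_square algebra_simps)
  then have factor: "1 + fps_X ^ 2 = (1 - C * fps_X) * (1 + C * fps_X)"
    using \<open>C * C = -1\<close> by simp
  have "fps_deriv ((1 + C * fps_X) ^ n) = of_nat n * C * (1 + C * fps_X) ^ k"
    unfolding fps_deriv_power' by (simp add: Suc C_def)
  then have "(1 + fps_X ^ 2) * fps_deriv ((1 + C * fps_X) ^ n)
      = of_nat n * C * ((1 + fps_X ^ 2) * (1 + C * fps_X) ^ k)"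
    by (simp only: mult_ac)
  also have "\<dots> = of_nat n * C * (1 - C * fps_X) * (1 + C * fps_X) ^ n"
    unfolding factor by (simp add: Suc mult_ac)
  finally show ?thesis
    by (simp add: C_def)
qed simp

lemma fps_deriv_binomial_difference:
  fixes c :: "'a::field_char_0" and n :: nat
  assumes "c ^ 2 = -1"
  defines "P \<equiv> (1 + fps_const c * fps_X) ^ n" and "M \<equiv> (1 - fps_const c * fps_X) ^ n"
  shows "(1 + fps_X ^ 2) * fps_deriv (P - M) = of_nat n * (fps_const c * (P + M) + fps_X * (P - M))"
proof -
  define C where "C = fps_const c"
  have "C * C = -1"
    using assms(1) by (simp add: C_def power2_eq_square flip: fps_const_mult)
  have "(- c) ^ 2 = -1"
    using assms(1) by simp
  have "(1 + fps_X ^ 2) * fps_deriv P = of_nat n * C * (1 - C * fps_X) * P"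
    using fps_deriv_one_plus_const_X_power[OF assms(1), of n] by (simp add: P_def C_def)
  moreover have "(1 + fps_X ^ 2) * fps_deriv M = - (of_nat n * C * (1 + C * fps_X) * M)"
    using fps_deriv_one_plus_const_X_power[OF \<open>(- c) ^ 2 = -1\<close>, of n]
    by (simp add: M_def C_def fps_const_neg[symmetric] del: fps_const_neg)
  ultimately have "(1 + fps_X ^ 2) * fps_deriv (P - M)
      = of_nat n * (C * (P + M) - (C * C) * fps_X * (P - M))"
    by (simp add: algebra_simps)
  then show ?thesis
    unfolding \<open>C * C = -1\<close> by (simp add: C_def)
qed

lemma prod_cot_frac_fps_deriv:
  assumes "n \<ge> 1"
  defines "Q \<equiv> \<Prod>k=1..n-1. 1 - fps_const (cot_frac n k) * fps_X"
  shows "(1 + fps_X ^ 2) * fps_deriv Q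
       = Q * (of_nat (n - 1) * fps_X + (fps_deriv (log_sin_ratio_fps n) oo arctan_fps))"
proof -
  define P where "P = (1 + fps_const \<i> * fps_X) ^ n"
  define M where "M = (1 - fps_const \<i> * fps_X) ^ n"
  define A where "A = fps_const (2 * \<i> * of_nat n)"
  define T where "T = (arctan_fps :: complex fps)"
  define \<Psi> where "\<Psi> = fps_deriv (log_sin_ratio_fps n) oo T"
  define K where "K m = bernoulli_even_fps (2 * \<i> * of_nat m) oo T" for m :: nat
  \<comment> \<open>with t = arctan z: K m = 2 m t cot (m t) and \<Psi> = n cot (n t) - cot t\<close>
  have i2: "\<i> ^ 2 = (-1 :: complex)"
    by simp
  have "A \<noteq> 0" and "T \<noteq> 0"
    using assms(1) by (auto simp: A_def T_def fps_eq_iff arctan_fps_def intro!: exI[of _ 1])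
  have Z: "P - M = A * fps_X * Q"
    using fps_cot_frac_product[of n] by (simp add: P_def M_def A_def Q_def)
  have Z_deriv: "(1 + fps_X ^ 2) * fps_deriv (P - M)
      = of_nat n * (fps_const \<i> * (P + M) + fps_X * (P - M))"
    using fps_deriv_binomial_difference[OF i2, of n] by (simp add: P_def M_def)
  have A_eq: "A = 2 * of_nat n * fps_const \<i>"
    by (simp add: A_def fps_numeral_fps_const fps_of_nat[symmetric])
  have K_n: "K n * (P - M) = A * T * (P + M)"
    using bernoulli_even_fps_compose_arctan_mult[OF i2, of n]
    by (simp add: K_def P_def M_def A_def T_def)
  have K_1: "K 1 * fps_X = 2 * T"
    using bernoulli_even_fps_compose_arctan_mult_X[OF i2] by (simp add: K_def T_def)
  have K_diff: "2 * T * \<Psi> = K n - K 1"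
    using log_sin_ratio_fps_deriv_compose_arctan[OF i2, of n] by (simp add: K_def T_def \<Psi>_def)
  have "A * (2 * T * fps_X) * ((1 + fps_X ^ 2) * fps_deriv Q)
      = 2 * T * ((1 + fps_X ^ 2) * fps_deriv (P - M)) - 2 * T * A * (1 + fps_X ^ 2) * Q"
    unfolding Z by (simp add: A_def algebra_simps)
  also have "\<dots> = A * T * (P + M) - 2 * T * A * Q + 2 * T * of_nat (n - 1) * fps_X * (P - M)"
    unfolding Z_deriv A_eq using assms(1)
    by (simp add: Z A_eq of_nat_diff power2_eq_square algebra_simps)
  also have "\<dots> = (P - M) * (K n - K 1) + 2 * T * of_nat (n - 1) * fps_X * (P - M)"
    using K_n K_1 by (simp add: Z algebra_simps)
  also have "\<dots> = A * (2 * T * fps_X) * (Q * (of_nat (n - 1) * fps_X + \<Psi>))"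
    unfolding K_diff[symmetric] by (simp add: Z algebra_simps)
  finally show ?thesis
    using \<open>A \<noteq> 0\<close> \<open>T \<noteq> 0\<close> by (simp add: \<Psi>_def T_def)
qed

theorem sum_inverse_cot_frac_fps:
  assumes "n \<ge> 1"
  shows "(\<Sum>k=1..n-1. inverse (1 - fps_const (cot_frac n k) * fps_X))
       = of_nat (n - 1) * fps_deriv arctan_fps
         - fps_X * fps_deriv (log_sin_ratio_fps n oo arctan_fps)"
proof -
  define Q where "Q = (\<Prod>k=1..n-1. 1 - fps_const (cot_frac n k) * fps_X)"
  define S where "S = (\<Sum>k=1..n-1. inverse (1 - fps_const (cot_frac n k) * fps_X))"
  define \<Psi> where "\<Psi> = fps_deriv (log_sin_ratio_fps n) oo (arctan_fps :: complex fps)"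
  have "1 - fps_const c * fps_X \<noteq> (0 :: complex fps)" for c
    by (auto simp: fps_eq_iff intro!: exI[of _ 0])
  then have "Q \<noteq> 0"
    by (simp add: Q_def)
  have log_deriv: "S * Q = of_nat (n - 1) * Q - fps_X * fps_deriv Q"
    using sum_fps_inverse_factors_mult_prod[of "{1..n-1}" "cot_frac n"] by (simp add: S_def Q_def)
  have "Q * ((1 + fps_X ^ 2) * S) = (1 + fps_X ^ 2) * (S * Q)"
    by (simp only: mult_ac)
  also have "\<dots> = (1 + fps_X ^ 2) * (of_nat (n - 1) * Q - fps_X * fps_deriv Q)"
    by (simp only: log_deriv)
  also have "\<dots>
      = of_nat (n - 1) * (1 + fps_X ^ 2) * Q - fps_X * ((1 + fps_X ^ 2) * fps_deriv Q)"
    by (simp only: algebra_simps)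
  also have "(1 + fps_X ^ 2) * fps_deriv Q = Q * (of_nat (n - 1) * fps_X + \<Psi>)"
    using prod_cot_frac_fps_deriv[OF assms] unfolding Q_def \<Psi>_def .
  also have "of_nat (n - 1) * (1 + fps_X ^ 2) * Q - fps_X * (Q * (of_nat (n - 1) * fps_X + \<Psi>))
      = Q * (of_nat (n - 1) - fps_X * \<Psi>)"
    by (simp add: power2_eq_square algebra_simps)
  finally have "(1 + fps_X ^ 2) * S = of_nat (n - 1) - fps_X * \<Psi>"
    using \<open>Q \<noteq> 0\<close> by simp
  have "S = ((1 + fps_X ^ 2) * fps_deriv arctan_fps) * S"
    by (simp add: arctan_fps_deriv)
  also have "\<dots> = fps_deriv arctan_fps * ((1 + fps_X ^ 2) * S)"
    by (simp only: mult_ac)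
  finally have "S = fps_deriv arctan_fps * (of_nat (n - 1) - fps_X * \<Psi>)"
    unfolding \<open>(1 + fps_X ^ 2) * S = of_nat (n - 1) - fps_X * \<Psi>\<close> .
  then show ?thesis
    by (simp add: S_def \<Psi>_def fps_compose_deriv algebra_simps)
qed

lemma sum_cot_power_even_eq:
  assumes "n \<ge> 1"
  shows "(\<Sum>k = 1..n-1. cot (real k * pi / real n) ^ (2*m))
       = (real n - 1) * (-1) ^ m - 2 * real m * fps_nth (log_sin_ratio_fps n oo arctan_fps) (2*m)"
proof -
  have "complex_of_real (\<Sum>k = 1..n-1. cot (real k * pi / real n) ^ (2*m))
      = fps_nth (\<Sum>k=1..n-1. inverse (1 - fps_const (cot_frac n k) * fps_X)) (2*m)"
    by (simp add: fps_sum_nth fps_nth_inverse_one_minus_const_X cot_frac_def)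
  also have "\<dots> = fps_nth (of_nat (n - 1) * fps_deriv arctan_fps
                            - fps_X * fps_deriv (log_sin_ratio_fps n oo arctan_fps)) (2*m)"
    using assms by (subst sum_inverse_cot_frac_fps) simp_all
  also have "\<dots>
      = of_nat (n - 1) * (-1) ^ m - of_nat (2*m) * fps_nth (log_sin_ratio_fps n oo arctan_fps) (2*m)"
    using fps_XD_nth[of "log_sin_ratio_fps n oo arctan_fps :: complex fps" "2*m"]
    by (simp add: fps_XD_def fps_of_nat[symmetric] fps_nth_deriv_arctan_fps
             del: fps_XD_nth fps_deriv_nth)
  also have "(log_sin_ratio_fps n oo arctan_fps :: complex fps)
      = fps_of_real (log_sin_ratio_fps n oo arctan_fps)"
    by (simp only: fps_of_real_compose fps_of_real_log_sin_ratio_fps fps_of_real_arctan_fps)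
  finally have "complex_of_real (\<Sum>k = 1..n-1. cot (real k * pi / real n) ^ (2*m))
      = complex_of_real ((real n - 1) * (-1) ^ m
          - 2 * real m * fps_nth (log_sin_ratio_fps n oo arctan_fps) (2*m))"
    using assms by (simp add: of_nat_diff)
  then show ?thesis
    by (simp only: of_real_eq_iff)
qed

theorem corollary6p8:
  fixes m n :: nat
  assumes "m \<ge> 1" and "n \<ge> 2"
  shows "(\<Sum>k = 1..n-1. cot (real k * pi / real n) ^ (2*m))
       = (-1) ^ m * (real n - 1)
         - 1 / fact (2*m - 1) *
           (\<Sum>k = 1..m. (-1) ^ k * arctan_num (2*m) (2*k)
              * (4 ^ k * bernoulli_num (2*k) / (2 * real k)) * (real n ^ (2*k) - 1))"
proof -
  define L where "L = (fps_nth (log_sin_ratio_fps n oo arctan_fps) (2*m) :: real)"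
  have "(\<Sum>k = 1..n-1. cot (real k * pi / real n) ^ (2*m))
      = (real n - 1) * (-1) ^ m - 2 * real m * L"
    using assms(2) sum_cot_power_even_eq[of n m] by (simp add: L_def)
  also have "2 * real m * L = 1 / fact (2*m - 1) * (fact (2*m) * L)"
    using assms(1) by (simp add: fact_reduce[of "2*m"])
  also have "fact (2*m) * L = (\<Sum>k=1..m. (-1) ^ k * arctan_num (2*m) (2*k)
          * (4 ^ k * bernoulli_num (2*k) / (2 * real k)) * (real n ^ (2*k) - 1))"
    unfolding L_def by (rule fps_nth_log_sin_ratio_compose_arctan)
  finally show ?thesis
    by (simp only: mult.commute)
qed

end
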